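(* For every $n\in\mathbb N$ the set $\mathbb P^T_n=\{p^{(k)}_n: k\in\mathbb N\}$ is not (R)-dense. Moreover, $\lim_{k\to+\infty}p^{(k+1)}_n/p^{(k)}_n=+\infty$, and $R^d(\mathbb P^T_n)\cap(0,+\infty)=\emptyset$.
   Context: Let $p_n$ denote the $n$-th prime number. Define $p^{(0)}_n=n$ and recursively $p^{(k+1)}_n=p_{p^{(k)}_n}$ for $k\in\mathbb N_0$. For $A\subset\mathbb N$, its ratio set is $R(A)=\{a/b:a,b\in A\}$; $A$ is (R)-dense if $R(A)$ is dense in $(0,+\infty)$. For $B\subset(0,+\infty)$, $B^d$ denotes the set of accumulation points of $B$, and $R^d(A)=(R(A))^d$. *)

theory Defs
  imports "HOL-Analysis.Analysis" "HOL-Computational_Algebra.Primes" "HOL-Library.Infinite_Set"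
begin

text \<open>The n-th prime, 1-indexed: nth_prime 1 = 2, nth_prime 2 = 3, ...
  (value at 0 is irrelevant junk).\<close>
definition nth_prime :: "nat \<Rightarrow> nat" where
  "nth_prime n = enumerate {p::nat. prime p} (n - 1)"

definition iter_prime :: "nat \<Rightarrow> nat \<Rightarrow> nat" where
  "iter_prime k n = (nth_prime ^^ k) n"

definition PT :: "nat \<Rightarrow> nat set" where
  "PT n = {iter_prime k n | k. k \<ge> 1}"

definition ratio_set :: "nat set \<Rightarrow> real set" where
  "ratio_set A = {real a / real b | a b. a \<in> A \<and> b \<in> A}"

definition R_dense :: "nat set \<Rightarrow> bool" where
  "R_dense A \<longleftrightarrow> {0<..} \<subseteq> closure (ratio_set A)"

end

theory Submission
  imports Defs
begin

(* Erdos' bound prod_{p <= x} p <= 4^x shows that fewer than x/(2c) primes up to x exceed 16^c,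
   so pi(x) = o(x) and p_m / m tends to infinity. Since p^(k+1)_n = p_a with a = p^(k)_n
   strictly increasing in k, the consecutive ratios p^(k+1)_n / p^(k)_n tend to infinity.
   For such a sequence, once a_(k+1) >= c a_k for k >= K, a ratio a_i / a_j in (1/c, c) with
   i <> j forces min i j < K and then max (a_i, a_j) <= c a_K; so every such window meets the
   ratio set in finitely many points and no x > 0 is an accumulation point. A ratio set dense in
   (0, +oo) would then contain all of (0, +oo), which is impossible for a subset of the rationals. *)

lemma prod_primes_dvd:
  fixes A :: "nat set"
  assumes "finite A" "\<And>p. p \<in> A \<Longrightarrow> prime p" "\<And>p. p \<in> A \<Longrightarrow> p dvd x"
  shows "\<Prod>A dvd x"
  using assms
proof (induction A rule: finite_induct)
  case empty then show ?case by simp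
next
  case (insert p A)
  have "coprime p (\<Prod>A)"
    using insert by (intro prod_coprime_right) (metis insertCI primes_coprime)
  then show ?case using insert by (simp add: divides_mult)
qed

lemma middle_binomial_odd_le: "(2*m+1 choose m) \<le> 4^m"
proof -
  have "(2*m+1 choose m) \<le> (\<Sum>k\<le>m. 2*m+1 choose k)"
    by (rule member_le_sum) auto
  also have "\<dots> = 4^m"
    by (subst binomial_r_part_sum) (simp add: power_mult)
  finally show ?thesis .
qed

lemma prime_dvd_middle_binomial_odd:
  assumes "prime p" "m + 1 < p" "p \<le> 2*m+1"
  shows "p dvd (2*m+1 choose m)"
proof -
  have "fact m * fact (m+1) * (2*m+1 choose m) = (fact (2*m+1) :: nat)"
    using binomial_fact_lemma[of m "2*m+1"] by simp
  moreover have "p dvd fact (2*m+1)" and "\<not> p dvd fact m * fact (m+1)"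
    using assms by (simp_all only: prime_dvd_mult_iff[OF assms(1)] prime_dvd_fact_iff[OF assms(1)]) auto
  ultimately show ?thesis
    using assms(1) by (metis prime_dvd_mult_iff)
qed

definition primorial :: "nat \<Rightarrow> nat" where
  "primorial n = \<Prod>{p. prime p \<and> p \<le> n}"

lemma primorial_Suc:
  "primorial (Suc n) = (if prime (Suc n) then Suc n * primorial n else primorial n)"
proof -
  have "{p. prime p \<and> p \<le> Suc n} = (if prime (Suc n) then insert (Suc n) else id) {p. prime p \<and> p \<le> n}"
    by (auto simp: le_Suc_eq)
  then show ?thesis
    unfolding primorial_def by simp
qed

lemma primorial_le_four_pow: "primorial n \<le> 4^n"
proof (induction n rule: less_induct)
  case (less n)
  consider "n \<le> 2" | "n > 2" "even n" | m where "m \<ge> 1" "n = 2*m+1"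
  proof -
    have "n \<le> 2 \<or> (n > 2 \<and> even n) \<or> (\<exists>m\<ge>1. n = 2*m+1)"
      by presburger
    then show thesis
      using that by blast
  qed
  then show ?case
  proof cases
    case 1
    then have "n = 0 \<or> n = 1 \<or> n = 2" by auto
    moreover have "primorial 0 = 1"
      unfolding primorial_def by (simp add: Collect_conj_eq)
    ultimately show ?thesis
      by (auto simp: primorial_Suc numeral_2_eq_2)
  next
    case 2
    then have "\<not> prime n"
      using prime_odd_nat by blast
    then have "primorial n = primorial (n-1)"
      using primorial_Suc[of "n-1"] 2 by simp
    also have "\<dots> \<le> 4^(n-1)"
      using less 2 by simp
    finally show ?thesis
      by (meson le_trans diff_le_self power_increasing zero_less_numeral one_le_numeral)
  next
    case 3
    define Q where "Q = {p. prime p \<and> m+1 < p \<and> p \<le> n}"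
    have split: "{p. prime p \<and> p \<le> n} = {p. prime p \<and> p \<le> m+1} \<union> Q"
      using 3 by (auto simp: Q_def)
    have "primorial n = primorial (m+1) * \<Prod>Q"
      unfolding primorial_def split by (subst prod.union_disjoint) (auto simp: Q_def)
    moreover have "\<Prod>Q \<le> 4^m"
    proof -
      have "\<Prod>Q dvd (2*m+1 choose m)"
      proof (rule prod_primes_dvd)
        fix p assume "p \<in> Q"
        then show "p dvd (2*m+1 choose m)"
          using 3 by (intro prime_dvd_middle_binomial_odd) (auto simp: Q_def)
      qed (auto simp: Q_def)
      then have "\<Prod>Q \<le> (2*m+1 choose m)"
        by (rule dvd_imp_le) simp
      also have "\<dots> \<le> 4^m"
        by (rule middle_binomial_odd_le)
      finally show ?thesis .
    qed
    moreover have "primorial (m+1) \<le> 4^(m+1)"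
      using 3 by (intro less) simp
    ultimately have "primorial n \<le> 4^(m+1) * 4^m"
      by (simp add: mult_le_mono)
    also have "\<dots> = 4^n"
      using 3 by (simp add: mult_2 flip: power_add)
    finally show ?thesis .
  qed
qed

lemma card_primes_le_sublinear:
  "2 * c * card {p. prime p \<and> p \<le> x} \<le> 2 * c * 16^c + x"
proof -
  define r :: nat where "r = 16^c"
  define T where "T = {p. prime p \<and> r < p \<and> p \<le> x}"
  have "finite T"
    unfolding T_def by simp
  have "{p. prime p \<and> p \<le> x} \<subseteq> {1..r} \<union> T"
    by (auto simp: T_def Suc_le_eq prime_gt_0_nat)
  then have "card {p. prime p \<and> p \<le> x} \<le> card ({1..r} \<union> T)"
    by (intro card_mono) (auto simp: T_def)
  also have "\<dots> \<le> r + card T"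
    using card_Un_le[of "{1..r}" T] by simp
  finally have card_le: "card {p. prime p \<and> p \<le> x} \<le> r + card T" .
  have "4 ^ (2 * c * card T) = (\<Prod>p\<in>T. r)"
    by (simp add: r_def power_mult flip: power_mult_distrib)
  also have "\<dots> \<le> \<Prod>T"
    by (rule prod_mono) (auto simp: T_def)
  also have "\<Prod>T \<le> primorial x"
  proof (rule dvd_imp_le)
    show "\<Prod>T dvd primorial x"
      unfolding primorial_def T_def by (rule prod_dvd_prod_subset) auto
    show "0 < primorial x"
      unfolding primorial_def by (rule prod_pos) (auto dest: prime_gt_0_nat)
  qed
  also have "\<dots> \<le> 4^x"
    by (rule primorial_le_four_pow)
  finally have "2 * c * card T \<le> x"
    by (rule power_le_imp_le_exp[rotated]) simp
  have "2 * c * card {p. prime p \<and> p \<le> x} \<le> 2 * c * (r + card T)"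
    using card_le by (rule mult_le_mono2)
  also have "\<dots> \<le> 2 * c * r + x"
    using \<open>2 * c * card T \<le> x\<close> by (simp add: add_mult_distrib2)
  finally show ?thesis
    unfolding r_def .
qed

lemma prime_enumerate_primes: "prime (enumerate {p::nat. prime p} k)"
  using enumerate_in_set[OF primes_infinite] by simp

lemma card_primes_le_nth_prime: "m \<le> card {p. prime p \<and> p \<le> nth_prime m}"
proof -
  have "enumerate {p. prime p} ` {..<m} \<subseteq> {p. prime p \<and> p \<le> nth_prime m}"
    using primes_infinite by (auto simp: nth_prime_def prime_enumerate_primes)
  moreover have "card (enumerate {p::nat. prime p} ` {..<m}) = m"
    using inj_enumerate[OF primes_infinite] by (simp add: card_image inj_on_subset)
  moreover have "finite {p. prime p \<and> p \<le> nth_prime m}"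
    by simp
  ultimately show ?thesis
    by (metis card_mono)
qed

lemma nth_prime_ge_mult:
  assumes "2 * 16^c \<le> m"
  shows "c * m \<le> nth_prime m"
proof -
  have "2 * c * m \<le> 2 * c * card {p. prime p \<and> p \<le> nth_prime m}"
    using card_primes_le_nth_prime by simp
  also have "\<dots> \<le> 2 * c * 16^c + nth_prime m"
    by (rule card_primes_le_sublinear)
  finally have "2 * c * m \<le> 2 * c * 16^c + nth_prime m" .
  moreover have "2 * c * 16^c \<le> c * m"
    using mult_le_mono2[OF assms, of c] by (simp add: mult.left_commute)
  ultimately show ?thesis
    by linarith
qed

lemma filterlim_nth_prime_div_at_top:
  "filterlim (\<lambda>m. real (nth_prime m) / real m) at_top sequentially"
proof (subst filterlim_at_top, intro allI)
  fix Z :: real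
  define c where "c = nat \<lceil>Z\<rceil>"
  show "\<forall>\<^sub>F m in sequentially. Z \<le> real (nth_prime m) / real m"
    using eventually_ge_at_top[of "2 * 16^c"]
  proof eventually_elim
    case (elim m)
    then have "c * m \<le> nth_prime m"
      by (rule nth_prime_ge_mult)
    then have "real c * real m \<le> real (nth_prime m)"
      by (metis of_nat_le_iff of_nat_mult)
    moreover have "0 < m"
      by (rule less_le_trans[OF _ elim]) simp
    ultimately have "real c \<le> real (nth_prime m) / real m"
      by (simp add: field_simps)
    then show ?case
      unfolding c_def by linarith
  qed
qed

lemma enumerate_primes_ge: "k + 2 \<le> enumerate {p::nat. prime p} k"
proof (induction k)
  case 0
  show ?case
    using prime_ge_2_nat[OF prime_enumerate_primes[of 0]] by simp
next
  case (Suc k)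
  then show ?case
    using enumerate_step[OF primes_infinite, of k] by simp
qed

lemma nth_prime_gt: "1 \<le> m \<Longrightarrow> m < nth_prime m"
  unfolding nth_prime_def using enumerate_primes_ge[of "m-1"] by simp

lemma iter_prime_Suc: "iter_prime (Suc k) n = nth_prime (iter_prime k n)"
  unfolding iter_prime_def by simp

lemma strict_mono_iter_prime:
  assumes "1 \<le> n"
  shows "strict_mono (\<lambda>k. iter_prime k n)"
proof -
  have pos: "1 \<le> iter_prime k n" for k
  proof (induction k)
    case 0
    then show ?case
      using assms by (simp add: iter_prime_def)
  next
    case (Suc k)
    then show ?case
      using nth_prime_gt[of "iter_prime k n"] by (simp add: iter_prime_Suc)
  qed
  show ?thesis
    using nth_prime_gt[OF pos] by (simp add: strict_mono_Suc_iff iter_prime_Suc)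
qed

lemma filterlim_iter_prime_ratio_at_top:
  assumes "1 \<le> n"
  shows "filterlim (\<lambda>k. real (iter_prime (Suc k) n) / real (iter_prime k n)) at_top sequentially"
  unfolding iter_prime_Suc
  using filterlim_nth_prime_div_at_top filterlim_subseq[OF strict_mono_iter_prime[OF assms]]
  by (rule filterlim_compose)

lemma ratio_set_mono: "A \<subseteq> B \<Longrightarrow> ratio_set A \<subseteq> ratio_set B"
  unfolding ratio_set_def by blast

lemma finite_ratio_set_window:
  fixes a :: "nat \<Rightarrow> nat" and c :: real
  assumes mono: "strict_mono a" and pos: "0 < a 0" and "1 \<le> c"
    and growth: "\<And>k. K \<le> k \<Longrightarrow> c * a k \<le> a (Suc k)"
  shows "finite (ratio_set (range a) \<inter> {1/c<..<c})"
proof -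
  define g where "g = (\<lambda>(i, j). real (a i) / real (a j))"
  define M where "M = nat \<lceil>c * a K\<rceil>"
  have apos: "0 < a k" for k
    using pos mono by (metis le0 less_le_trans strict_mono_less_eq)
  have amono: "real (a i) \<le> real (a j)" if "i \<le> j" for i j
    using mono that by (simp add: strict_mono_less_eq)
  have escape: "c \<le> g (i, j)" if "K \<le> j" "j < i" for i j
  proof -
    have "c * a j \<le> a i"
      using growth[OF that(1)] amono[of "Suc j" i] that(2) by simp
    then show ?thesis
      using apos[of j] unfolding g_def by (simp add: field_simps)
  qed
  have bounded: "i \<le> M \<and> j \<le> M" if "j < i" "g (i, j) < c" for i j
  proof -
    have "real (a j) \<le> real (a K)"
      using escape[of j i] that amono[of j K] by fastforce
    moreover have "a i < c * a j"
      using that(2) apos[of j] unfolding g_def by (simp add: field_simps)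
    moreover have "c * a j \<le> c * a K"
      using calculation(1) \<open>1 \<le> c\<close> by (intro mult_left_mono) auto
    moreover have "1 * real (a K) \<le> c * a K"
      using \<open>1 \<le> c\<close> by (rule mult_right_mono) simp
    ultimately have "a i \<le> c * a K" and "a j \<le> c * a K"
      by linarith+
    moreover have "i \<le> a i" "j \<le> a j"
      using strict_mono_imp_increasing[OF mono] by auto
    ultimately show ?thesis
      unfolding M_def by linarith
  qed
  have "ratio_set (range a) \<inter> {1/c<..<c} \<subseteq> insert 1 (g ` ({..M} \<times> {..M}))"
  proof
    fix y assume y: "y \<in> ratio_set (range a) \<inter> {1/c<..<c}"
    then obtain i j where ij: "y = g (i, j)"
      unfolding ratio_set_def g_def by auto
    consider "i = j" | "j < i" | "i < j"
      by linarith
    then show "y \<in> insert 1 (g ` ({..M} \<times> {..M}))"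
    proof cases
      case 1
      then show ?thesis
        using ij apos[of j] by (simp add: g_def)
    next
      case 2
      then show ?thesis
        using bounded[of j i] ij y by auto
    next
      case 3
      have "1/c < y"
        using y by simp
      then have "inverse y < c"
        using less_imp_inverse_less[OF \<open>1/c < y\<close>] \<open>1 \<le> c\<close> by simp
      moreover have "g (j, i) = inverse y"
        using ij by (simp add: g_def)
      ultimately have "g (j, i) < c"
        by simp
      then show ?thesis
        using bounded[of i j] ij 3 by auto
    qed
  qed
  then show ?thesis
    by (rule finite_subset) simp
qed

lemma not_islimpt_ratio_set:
  fixes a :: "nat \<Rightarrow> nat" and x :: real
  assumes mono: "strict_mono a" and pos: "0 < a 0"
    and ratio: "filterlim (\<lambda>k. real (a (Suc k)) / real (a k)) at_top sequentially"
    and "0 < x"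
  shows "\<not> x islimpt ratio_set (range a)"
proof
  assume limpt: "x islimpt ratio_set (range a)"
  define c where "c = x + 1/x + 1"
  have "0 < 1/x"
    using \<open>0 < x\<close> by simp
  have "1 \<le> c"
    using \<open>0 < x\<close> \<open>0 < 1/x\<close> unfolding c_def by linarith
  have "x < c"
    using \<open>0 < 1/x\<close> unfolding c_def by linarith
  have "1/x < c"
    using \<open>0 < x\<close> unfolding c_def by linarith
  then have "1/c < x"
    using less_imp_inverse_less[OF \<open>1/x < c\<close> \<open>0 < 1/x\<close>] by (simp add: inverse_eq_divide)
  with \<open>x < c\<close> have x_window: "x \<in> {1/c<..<c}"
    by simp
  obtain K where K: "\<And>k. K \<le> k \<Longrightarrow> c \<le> real (a (Suc k)) / real (a k)"
    using ratio[unfolded filterlim_at_top, rule_format, of c]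
    unfolding eventually_sequentially by blast
  have "0 < a k" for k
    using pos mono by (metis le0 less_le_trans strict_mono_less_eq)
  then have growth: "c * a k \<le> a (Suc k)" if "K \<le> k" for k
    using K[OF that] by (simp add: field_simps)
  have "finite (ratio_set (range a) \<inter> {1/c<..<c})"
    using growth by (rule finite_ratio_set_window[OF mono pos \<open>1 \<le> c\<close>])
  moreover have "infinite ({1/c<..<c} \<inter> ratio_set (range a))"
    using limpt x_window open_greaterThanLessThan unfolding islimpt_eq_acc_point by blast
  ultimately show False
    by (simp add: Int_commute)
qed

lemma R_dense_imp_positive_limpt:
  assumes "R_dense A"
  shows "\<exists>x>0. x islimpt ratio_set A"
proof (rule ccontr)
  assume "\<not> (\<exists>x>0. x islimpt ratio_set A)"
  with assms have "{0<..<1} \<subseteq> ratio_set A"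
    unfolding R_dense_def closure_def by auto
  also have "ratio_set A \<subseteq> \<rat>"
    unfolding ratio_set_def by (auto intro: Rats_divide)
  finally have "countable {0<..<1::real}"
    using countable_rat countable_subset by blast
  then show False
    using uncountable_open_interval[of 0 "1::real"] by simp
qed

theorem corollary3:
  fixes n :: nat
  assumes "n \<ge> 1"
  shows "\<not> R_dense (PT n)
    \<and> filterlim (\<lambda>k. real (iter_prime (Suc k) n) / real (iter_prime k n)) at_top sequentially
    \<and> {x::real. x islimpt ratio_set (PT n)} \<inter> {0<..} = {}"
proof -
  have PT_sub: "ratio_set (PT n) \<subseteq> ratio_set (range (\<lambda>k. iter_prime k n))"
    by (rule ratio_set_mono) (auto simp: PT_def)
  have "0 < iter_prime 0 n"
    using assms by (simp add: iter_prime_def)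
  then have no_limpt: "\<not> x islimpt ratio_set (PT n)" if "0 < x" for x
    using not_islimpt_ratio_set[OF strict_mono_iter_prime[OF assms] _
        filterlim_iter_prime_ratio_at_top[OF assms] that] islimpt_subset[OF _ PT_sub]
    by blast
  then have "\<not> R_dense (PT n)"
    using R_dense_imp_positive_limpt by blast
  with no_limpt filterlim_iter_prime_ratio_at_top[OF assms] show ?thesis
    by auto
qed

end
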